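(* Let $0<\alpha<1$, $\theta>0$, and let $\bar Z^{\alpha,\theta}(t)=(M_1(D_{\alpha,\theta}(t)),\dots,M_q(D_{\alpha,\theta}(t)))$. Its Lévy measure $\Pi^{\bar Z}$ is given, for $A_1,\dots,A_q\subseteq\mathbb{N}_0$, by $$\Pi^{\bar Z}(A_1\times\cdots\times A_q)=\frac{\alpha(\lambda+\theta)^\alpha}{\Gamma(1-\alpha)}\sum_{\bar n\succ\bar0}\ \sum_{\substack{\Omega(k_i,n_i)\\ i=1,\dots,q}}\Gamma\Big(\sum_{i=1}^q\sum_{j=1}^{k_i}n_{ij}-\alpha\Big)\prod_{i=1}^q\prod_{j=1}^{k_i}\frac{(\lambda_{ij}/(\lambda+\theta))^{n_{ij}}}{n_{ij}!}\,\mathbb{I}_{\{n_i\in A_i\}}.$$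
   Context: Fix $q\ge1$, integers $k_1,\dots,k_q\ge1$, $\lambda_{ij}>0$ ($1\le i\le q$, $1\le j\le k_i$), $\lambda=\sum_{i,j}\lambda_{ij}$. The MGCP $\bar M(t)=(M_1(t),\dots,M_q(t))$ is the $\mathbb{N}_0^q$-valued Lévy process with $\bar M(0)=\bar0$, independent components and $\Pr\{\bar M(t)=\bar n\}=\prod_{i=1}^q\sum_{\Omega(k_i,n_i)}\prod_{j=1}^{k_i}\frac{(\lambda_{ij}t)^{n_{ij}}}{n_{ij}!}e^{-\lambda_{ij}t}$. $\{D_{\alpha,\theta}(t)\}$ is a tempered $\alpha$-stable subordinator independent of $\bar M$: driftless, $\mathbb{E}e^{-sD_{\alpha,\theta}(t)}=e^{-t((s+\theta)^\alpha-\theta^\alpha)}$, Lévy measure $\frac{\alpha}{\Gamma(1-\alpha)}s^{-\alpha-1}e^{-\theta s}\,\mathrm{d}s$. $\Omega(k_i,n_i)=\{(n_{i1},\dots,n_{ik_i})\in\mathbb{N}_0^{k_i}:\sum_jjn_{ij}=n_i\}$; the inner sum runs over families $(n_{ij})$ with $(n_{i1},\dots,n_{ik_i})\in\Omega(k_i,n_i)$ for each $i$. $\bar n\succ\bar0$ means $\bar n\in\mathbb{N}_0^q\setminus\{\bar0\}$. *)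

theory Defs
  imports "HOL-Probability.Probability"
begin

text \<open>Points of N_0^q are encoded as functions nat => nat vanishing outside {1..q}.\<close>
definition lattice :: "nat \<Rightarrow> (nat \<Rightarrow> nat) set" where
  "lattice q = {n. \<forall>i. i \<notin> {1..q} \<longrightarrow> n i = 0}"

definition Omega :: "nat \<Rightarrow> nat \<Rightarrow> (nat \<Rightarrow> nat) set" where
  "Omega k m = {v. (\<forall>j. j \<notin> {1..k} \<longrightarrow> v j = 0) \<and> (\<Sum>j=1..k. j * v j) = m}"

definition OmegaFam :: "nat \<Rightarrow> (nat \<Rightarrow> nat) \<Rightarrow> (nat \<Rightarrow> nat) \<Rightarrow> (nat \<Rightarrow> nat \<Rightarrow> nat) set" where
  "OmegaFam q k n = {v. (\<forall>i. i \<notin> {1..q} \<longrightarrow> v i = (\<lambda>_. 0)) \<and> (\<forall>i\<in>{1..q}. v i \<in> Omega (k i) (n i))}"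

definition total_rate :: "nat \<Rightarrow> (nat \<Rightarrow> nat) \<Rightarrow> (nat \<Rightarrow> nat \<Rightarrow> real) \<Rightarrow> real" where
  "total_rate q k lam = (\<Sum>i=1..q. \<Sum>j=1..k i. lam i j)"

text \<open>Pr{ M(s) = n } for the MGCP (n in lattice q).\<close>
definition mgcp_pmf :: "nat \<Rightarrow> (nat \<Rightarrow> nat) \<Rightarrow> (nat \<Rightarrow> nat \<Rightarrow> real) \<Rightarrow> real \<Rightarrow> (nat \<Rightarrow> nat) \<Rightarrow> real" where
  "mgcp_pmf q k lam s n =
     (\<Prod>i=1..q. \<Sum>v\<in>Omega (k i) (n i).
        \<Prod>j=1..k i. (lam i j * s) ^ (v j) / fact (v j) * exp (- lam i j * s))"

text \<open>Pr{ M(D(t)) = n } where mu t is the law of D(t), independent of M.\<close>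
definition subord_pmf :: "nat \<Rightarrow> (nat \<Rightarrow> nat) \<Rightarrow> (nat \<Rightarrow> nat \<Rightarrow> real) \<Rightarrow> (real \<Rightarrow> real measure)
    \<Rightarrow> real \<Rightarrow> (nat \<Rightarrow> nat) \<Rightarrow> real" where
  "subord_pmf q k lam mu t n = (\<integral>x. mgcp_pmf q k lam x n \<partial>(mu t))"

text \<open>w is the Levy measure (given by its point masses on N_0^q minus 0) of the
  N_0^q-valued Levy process with marginal laws p t: Levy--Khintchine (Laplace) formula
  of a driftless process with nonnegative integer jumps.\<close>
definition is_levy_measure :: "nat \<Rightarrow> (real \<Rightarrow> (nat \<Rightarrow> nat) \<Rightarrow> real) \<Rightarrow> ((nat \<Rightarrow> nat) \<Rightarrow> real) \<Rightarrow> bool" where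
  "is_levy_measure q p w \<longleftrightarrow>
     (\<forall>n. 0 \<le> w n) \<and> (\<forall>n. w n \<noteq> 0 \<longrightarrow> n \<in> lattice q \<and> n \<noteq> (\<lambda>_. 0)) \<and>
     w summable_on UNIV \<and>
     (\<forall>t\<ge>0. \<forall>u::nat \<Rightarrow> real. (\<forall>i. 0 \<le> u i) \<longrightarrow>
        (\<Sum>\<^sub>\<infinity>n\<in>lattice q. p t n * exp (- (\<Sum>i=1..q. u i * real (n i)))) =
        exp (- t * (\<Sum>\<^sub>\<infinity>n. (1 - exp (- (\<Sum>i=1..q. u i * real (n i)))) * w n)))"

end

theory Submission
  imports Defs
begin

text \<open>Represent the MGCP as a compound Poisson process: independent Poisson counts N_ij of jumps
  of size j in the i-th component, with M_i = sum_j j N_ij.  Its Laplace exponent is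
  phi(u) = sum lambda_ij (1 - exp (- j u_i)), so the subordinated process has Laplace exponent
  (phi(u) + theta)^alpha - theta^alpha.  With c = lambda + theta one has phi(u) + theta = c (1 - B(u)),
  where B(u) = sum (lambda_ij / c) exp (- j u_i) < 1.  Expanding (1 - B)^alpha by the binomial series
  sum_N Gamma(N - alpha) / Gamma(- alpha) B^N / N! and B^N by the multinomial theorem writes this
  exponent as sum_n (1 - exp (- u . n)) w(n) with the stated weights w.  No other weights do so: the
  difference of two candidates, corrected at the origin, has a generating function vanishing on
  (0,1)^q, and a multivariate power series vanishing there has zero coefficients.\<close>

section \<open>Unconditional sums and integrals\<close>

lemma has_sum_diff:
  fixes f g :: "'a \<Rightarrow> 'b :: topological_ab_group_add"
  assumes "(f has_sum a) A" "(g has_sum b) A"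
  shows "((\<lambda>x. f x - g x) has_sum (a - b)) A"
proof -
  have "((\<lambda>x. - g x) has_sum (- b)) A"
    using assms(2) by (simp add: has_sum_uminus)
  from has_sum_add[OF assms(1) this] show ?thesis
    by simp
qed

lemma has_sum_fiber_sums:
  fixes g :: "'a \<Rightarrow> real"
  assumes "(g has_sum S) A" "\<And>x. x \<in> A \<Longrightarrow> h x \<in> B"
    "\<And>y. y \<in> B \<Longrightarrow> finite {x\<in>A. h x = y}"
  shows "((\<lambda>y. \<Sum>x\<in>{x\<in>A. h x = y}. g x) has_sum S) B"
proof -
  have "bij_betw (\<lambda>x. (h x, x)) A (Sigma B (\<lambda>y. {x\<in>A. h x = y}))"
    using assms(2) by (auto simp: bij_betw_def inj_on_def)
  with assms(1) have "((\<lambda>(y, x). g x) has_sum S) (Sigma B (\<lambda>y. {x\<in>A. h x = y}))"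
    using has_sum_reindex_bij_betw by fastforce
  then show ?thesis
    by (rule has_sum_SigmaD) (auto intro!: has_sum_finiteI assms(3))
qed

lemma has_sum_of_fiber_sums_nonneg:
  fixes g :: "'a \<Rightarrow> real"
  assumes "((\<lambda>y. \<Sum>x\<in>{x\<in>A. h x = y}. g x) has_sum S) B" "\<And>x. x \<in> A \<Longrightarrow> h x \<in> B"
    "\<And>y. y \<in> B \<Longrightarrow> finite {x\<in>A. h x = y}" "\<And>x. x \<in> A \<Longrightarrow> g x \<ge> 0"
  shows "(g has_sum S) A"
proof -
  have bij: "bij_betw (\<lambda>x. (h x, x)) A (Sigma B (\<lambda>y. {x\<in>A. h x = y}))"
    using assms(2) by (auto simp: bij_betw_def inj_on_def)
  have fiber: "((\<lambda>x. (\<lambda>(y, x). g x) (y, x)) has_sum (\<Sum>x\<in>{x\<in>A. h x = y}. g x))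
      {x\<in>A. h x = y}"
    if "y \<in> B" for y
    using that by (auto intro!: has_sum_finiteI assms(3))
  have "(\<lambda>(y, x). g x) summable_on (Sigma B (\<lambda>y. {x\<in>A. h x = y}))"
    by (rule summable_on_SigmaI[OF fiber]) (use assms in \<open>auto simp: summable_on_def\<close>)
  with has_sum_SigmaI[OF fiber assms(1)]
  have "((\<lambda>(y, x). g x) has_sum S) (Sigma B (\<lambda>y. {x\<in>A. h x = y}))"
    by simp
  then have "((\<lambda>x. (\<lambda>(y, x). g x) (h x, x)) has_sum S) A"
    using has_sum_reindex_bij_betw[OF bij] by blast
  then show ?thesis
    by simp
qed

lemma has_sum_prod_PiE_nonneg:
  fixes f :: "'a \<Rightarrow> 'b \<Rightarrow> real"
  assumes "finite A" "\<And>x. x \<in> A \<Longrightarrow> (f x has_sum s x) (B x)"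
    "\<And>x y. x \<in> A \<Longrightarrow> y \<in> B x \<Longrightarrow> f x y \<ge> 0"
  shows "((\<lambda>g. \<Prod>x\<in>A. f x (g x)) has_sum (\<Prod>x\<in>A. s x)) (PiE A B)"
  using assms
proof (induction A rule: finite_induct)
  case empty
  then show ?case by (simp add: has_sum_finiteI)
next
  case (insert a A)
  let ?P = "\<lambda>g. \<Prod>x\<in>A. f x (g x)"
  have IH: "(?P has_sum (\<Prod>x\<in>A. s x)) (PiE A B)"
    using insert by auto
  have inner: "((\<lambda>y. (\<lambda>(g, y). f a y * ?P g) (g, y)) has_sum (s a * ?P g)) (B a)" if "g \<in> PiE A B" for g
    using has_sum_cmult_left[OF insert.prems(1)[of a], of "?P g"] by (simp add: mult.commute)
  have outer: "((\<lambda>g. s a * ?P g) has_sum (s a * (\<Prod>x\<in>A. s x))) (PiE A B)"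
    using has_sum_cmult_right[OF IH] by simp
  have "(\<lambda>(g, y). f a y * ?P g) summable_on (PiE A B \<times> B a)"
    by (rule summable_on_SigmaI[OF inner])
      (use outer insert.prems(2) in \<open>auto simp: summable_on_def intro!: mult_nonneg_nonneg prod_nonneg\<close>)
  then have "((\<lambda>(g, y). f a y * ?P g) has_sum (s a * (\<Prod>x\<in>A. s x))) (PiE A B \<times> B a)"
    using has_sum_SigmaI[OF inner outer] by simp
  moreover have "(\<lambda>g. \<Prod>x\<in>insert a A. f x (g x)) \<circ> (\<lambda>(g, y). g(a := y)) = (\<lambda>(g, y). f a y * ?P g)"
  proof -
    have "(\<Prod>x\<in>A. f x ((g(a := y)) x)) = ?P g" for g y
      using insert.hyps by (intro prod.cong) auto
    then show ?thesis
      using insert.hyps by (auto simp: fun_eq_iff)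
  qed
  moreover have "PiE (insert a A) B = (\<lambda>(g, y). g(a := y)) ` (PiE A B \<times> B a)"
    unfolding PiE_insert_eq
    by (subst swap_product [symmetric]) (simp add: image_image case_prod_unfold)
  ultimately show ?case
    using has_sum_reindex[OF inj_combinator'[OF insert.hyps(2)],
        of "\<lambda>g. \<Prod>x\<in>insert a A. f x (g x)"] insert.hyps
    by simp
qed

lemma infsum_one_minus_mult:
  fixes v e :: "'a \<Rightarrow> real"
  assumes "\<forall>n. 0 \<le> v n" "v summable_on UNIV" "\<forall>n. 0 \<le> e n \<and> e n \<le> 1"
  shows "(\<lambda>n. e n * v n) summable_on UNIV"
    and "(\<Sum>\<^sub>\<infinity>n. (1 - e n) * v n) = (\<Sum>\<^sub>\<infinity>n. v n) - (\<Sum>\<^sub>\<infinity>n. e n * v n)"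
proof -
  show summable: "(\<lambda>n. e n * v n) summable_on UNIV"
    using assms by (intro summable_on_comparison_test[OF assms(2)]) (auto intro: mult_left_le_one_le)
  have "((\<lambda>n. v n - e n * v n) has_sum ((\<Sum>\<^sub>\<infinity>n. v n) - (\<Sum>\<^sub>\<infinity>n. e n * v n))) UNIV"
    using assms(2) summable by (intro has_sum_diff has_sum_infsum)
  then show "(\<Sum>\<^sub>\<infinity>n. (1 - e n) * v n) = (\<Sum>\<^sub>\<infinity>n. v n) - (\<Sum>\<^sub>\<infinity>n. e n * v n)"
    by (simp add: infsumI algebra_simps)
qed

lemma sums_integral_nonneg:
  fixes h :: "nat \<Rightarrow> 'a \<Rightarrow> real"
  assumes integrable: "\<And>i. integrable M (h i)"
    and nonneg: "AE x in M. \<forall>i. 0 \<le> h i x"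
    and sums: "AE x in M. (\<lambda>i. h i x) sums G x"
    and "integrable M G"
  shows "(\<lambda>i. integral\<^sup>L M (h i)) sums integral\<^sup>L M G"
proof -
  have int_nonneg: "0 \<le> integral\<^sup>L M (h i)" for i
    using nonneg by (intro integral_nonneg_AE) (auto elim!: eventually_mono)
  have partial_sums_bounded: "(\<Sum>i<N. integral\<^sup>L M (h i)) \<le> integral\<^sup>L M G" for N
  proof -
    have "(\<Sum>i<N. integral\<^sup>L M (h i)) = integral\<^sup>L M (\<lambda>x. \<Sum>i<N. h i x)"
      using integrable by simp
    also have "\<dots> \<le> integral\<^sup>L M G"
    proof (rule integral_mono_AE)
      show "AE x in M. (\<Sum>i<N. h i x) \<le> G x"
        using nonneg sums by eventually_elim (metis sums_iff sum_le_suminf finite_lessThan)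
    qed (use integrable assms(4) in simp_all)
    finally show ?thesis .
  qed
  have "integral\<^sup>L M (\<lambda>x. norm (h i x)) = integral\<^sup>L M (h i)" for i
    using nonneg integrable by (intro integral_cong_AE) (auto elim!: eventually_mono)
  then have "summable (\<lambda>i. integral\<^sup>L M (\<lambda>x. norm (h i x)))"
    using summableI_nonneg_bounded[OF int_nonneg partial_sums_bounded] by simp
  moreover have "AE x in M. summable (\<lambda>i. norm (h i x))"
    using nonneg sums by eventually_elim (auto simp: sums_iff)
  ultimately have "(\<lambda>i. integral\<^sup>L M (h i)) sums (\<integral>x. (\<Sum>i. h i x) \<partial>M)"
    by (intro sums_integral integrable)
  also have "(\<integral>x. (\<Sum>i. h i x) \<partial>M) = integral\<^sup>L M G"
    using sums integrable assms(4)
    by (intro integral_cong_AE) (auto elim!: eventually_mono simp: sums_unique[symmetric])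
  finally show ?thesis .
qed

lemma has_sum_integral_nonneg:
  fixes g :: "'i \<Rightarrow> 'a \<Rightarrow> real"
  assumes "countable S" "infinite S"
    and integrable: "\<And>n. n \<in> S \<Longrightarrow> integrable M (g n)"
    and nonneg: "\<And>n. n \<in> S \<Longrightarrow> AE x in M. 0 \<le> g n x"
    and has_sum: "AE x in M. ((\<lambda>n. g n x) has_sum G x) S"
    and "integrable M G"
  shows "((\<lambda>n. integral\<^sup>L M (g n)) has_sum integral\<^sup>L M G) S"
proof -
  define e where "e = from_nat_into S"
  have bij: "bij_betw e UNIV S"
    unfolding e_def using assms(1,2) by (rule bij_betw_from_nat_into)
  then have e: "e i \<in> S" for i
    by (auto simp: bij_betw_def)
  have "AE x in M. (\<lambda>i. g (e i) x) sums G x"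
    using has_sum
  proof eventually_elim
    case (elim x)
    then show ?case
      using has_sum_reindex_bij_betw[OF bij, of "\<lambda>n. g n x"] by (simp add: has_sum_imp_sums)
  qed
  with e have "(\<lambda>i. integral\<^sup>L M (g (e i))) sums integral\<^sup>L M G"
    by (intro sums_integral_nonneg integrable assms(6)) (auto simp: AE_all_countable nonneg)
  then have "((\<lambda>i. integral\<^sup>L M (g (e i))) has_sum integral\<^sup>L M G) UNIV"
    by (intro sums_nonneg_imp_has_sum integral_nonneg_AE nonneg e)
  then show ?thesis
    using has_sum_reindex_bij_betw[OF bij, of "\<lambda>n. integral\<^sup>L M (g n)"] by simp
qed

section \<open>The identity theorem for power series\<close>

lemma powser_zero_on_unit_interval_imp_coeff_zero:
  fixes c :: "nat \<Rightarrow> real"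
  assumes zero: "\<And>x. 0 < x \<Longrightarrow> x < 1 \<Longrightarrow> (\<lambda>m. c m * x ^ m) sums 0"
  shows "c m = 0"
proof (induction m rule: less_induct)
  case (less m)
  have tail: "(\<lambda>i. c (i + m) * x ^ i) sums 0" if x: "0 < x" "x < 1" for x
  proof -
    have "(\<lambda>i. c (i + m) * x ^ (i + m)) sums 0"
      using sums_iff_shift[of "\<lambda>m. c m * x ^ m" m 0] zero[OF x] less by simp
    then have "(\<lambda>i. c (i + m) * x ^ (i + m) / x ^ m) sums 0"
      using sums_divide by fastforce
    moreover have "c (i + m) * x ^ (i + m) / x ^ m = c (i + m) * x ^ i" for i
      using x by (simp add: power_add)
    ultimately show ?thesis
      by simp
  qed
  define P where "P y = (\<Sum>i. c (i + m) * y ^ i)" for y :: real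
  have "summable (\<lambda>i. c (i + m) * (1/2 :: real) ^ i)"
    using tail[of "1/2"] sums_summable by auto
  then have "isCont P 0"
    unfolding P_def by (rule isCont_powser) simp
  then have "(P \<longlongrightarrow> P 0) (at_right 0)"
    unfolding isCont_def by (rule tendsto_within_subset) simp
  moreover have "(P \<longlongrightarrow> 0) (at_right 0)"
  proof (rule tendsto_eventually)
    show "\<forall>\<^sub>F y in at_right 0. P y = 0"
      using eventually_at_right_real[of 0 "1 :: real"]
      by (auto elim!: eventually_mono simp: P_def intro!: sums_unique[symmetric] tail)
  qed
  ultimately have "P 0 = 0"
    using tendsto_unique[OF trivial_limit_at_right_real] by blast
  then show ?case
    using powser_zero[of "\<lambda>i. c (i + m)"] by (simp add: P_def)
qed

definition supported_on :: "nat set \<Rightarrow> (nat \<Rightarrow> nat) set" where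
  "supported_on I = {n. \<forall>i. i \<notin> I \<longrightarrow> n i = 0}"

lemma lattice_eq_supported_on: "lattice q = supported_on {1..q}"
  by (simp add: supported_on_def lattice_def)

lemma bij_betw_supported_on_insert:
  assumes "a \<notin> I"
  shows "bij_betw (\<lambda>(m, n). n(a := m)) (UNIV \<times> supported_on I) (supported_on (insert a I))"
proof (rule bij_betwI[where g = "\<lambda>n. (n a, n(a := 0))"])
  show "(\<lambda>n. (n a, n(a := 0))) ((\<lambda>(m, n). n(a := m)) p) = p" if "p \<in> UNIV \<times> supported_on I" for p
    using that assms by (auto simp: supported_on_def fun_eq_iff)
qed (auto simp: supported_on_def)

lemma has_sum_powser_split_variable:
  fixes d :: "(nat \<Rightarrow> nat) \<Rightarrow> real"
  assumes "a \<notin> I" "finite I" "d summable_on supported_on (insert a I)"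
    and z: "\<forall>i\<in>insert a I. \<bar>z i\<bar> \<le> 1"
  shows "((\<lambda>m. (\<Sum>\<^sub>\<infinity>n\<in>supported_on I. d (n(a := m)) * (\<Prod>i\<in>I. z i ^ n i)) * z a ^ m) has_sum
           (\<Sum>\<^sub>\<infinity>n\<in>supported_on (insert a I). d n * (\<Prod>i\<in>insert a I. z i ^ n i))) UNIV"
proof -
  let ?upd = "\<lambda>(m, n). n(a := m)"
  define F where "F n = d n * (\<Prod>i\<in>insert a I. z i ^ n i)" for n
  have bij: "bij_betw ?upd (UNIV \<times> supported_on I) (supported_on (insert a I))"
    using assms(1) by (rule bij_betw_supported_on_insert)
  have "(\<lambda>n. norm (F n)) summable_on supported_on (insert a I)"
  proof (rule Infinite_Sum.abs_summable_on_comparison_test')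
    show "(\<lambda>n. norm (d n)) summable_on supported_on (insert a I)"
      using assms(3) summable_on_iff_abs_summable_on_real by blast
    have "\<bar>\<Prod>i\<in>insert a I. z i ^ n i\<bar> \<le> 1" for n
      using z by (auto simp: abs_prod power_abs intro!: prod_le_1 power_le_one)
    then show "norm (F n) \<le> norm (d n)" for n
      by (auto simp: F_def abs_mult intro: mult_left_le)
  qed
  then have "F summable_on supported_on (insert a I)"
    using summable_on_iff_abs_summable_on_real by blast
  moreover have F_upd: "F \<circ> ?upd = (\<lambda>(m, n). z a ^ m * (d (n(a := m)) * (\<Prod>i\<in>I. z i ^ n i)))"
  proof -
    have "(\<Prod>i\<in>I. z i ^ (n(a := m)) i) = (\<Prod>i\<in>I. z i ^ n i)" for m n
      using assms(1) by (intro prod.cong) auto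
    then show ?thesis
      using assms(1,2) by (auto simp: fun_eq_iff F_def)
  qed
  ultimately have summable: "(\<lambda>(m, n). z a ^ m * (d (n(a := m)) * (\<Prod>i\<in>I. z i ^ n i)))
      summable_on (UNIV \<times> supported_on I)"
    using summable_on_reindex_bij_betw[OF bij, of F] by (simp add: o_def)
  have "(\<Sum>\<^sub>\<infinity>n\<in>supported_on (insert a I). F n) = (\<Sum>\<^sub>\<infinity>p\<in>UNIV \<times> supported_on I. (F \<circ> ?upd) p)"
    using infsum_reindex_bij_betw[OF bij, of F] by (simp add: o_def)
  also have "\<dots> = (\<Sum>\<^sub>\<infinity>m. \<Sum>\<^sub>\<infinity>n\<in>supported_on I. z a ^ m * (d (n(a := m)) * (\<Prod>i\<in>I. z i ^ n i)))"
    unfolding F_upd using infsum_Sigma'_banach[OF summable] by simp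
  finally have "((\<lambda>m. \<Sum>\<^sub>\<infinity>n\<in>supported_on I. z a ^ m * (d (n(a := m)) * (\<Prod>i\<in>I. z i ^ n i)))
      has_sum (\<Sum>\<^sub>\<infinity>n\<in>supported_on (insert a I). F n)) UNIV"
    using summable_on_Sigma_banach[OF summable] by (simp add: has_sum_infsum)
  then show ?thesis
    by (simp add: F_def infsum_cmult_right' mult.commute)
qed

lemma summable_on_slice:
  fixes d :: "(nat \<Rightarrow> nat) \<Rightarrow> real"
  assumes "a \<notin> I" "d summable_on supported_on (insert a I)"
  shows "(\<lambda>n. d (n(a := m))) summable_on supported_on I"
proof -
  have inj: "inj_on (\<lambda>n. n(a := m)) (supported_on I)"
    using assms(1) by (auto simp: inj_on_def supported_on_def fun_eq_iff) metis
  have "(\<lambda>n. n(a := m)) ` supported_on I \<subseteq> supported_on (insert a I)"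
    by (auto simp: supported_on_def)
  then have "d summable_on (\<lambda>n. n(a := m)) ` supported_on I"
    by (rule summable_on_subset[OF assms(2)])
  then show ?thesis
    using summable_on_reindex[OF inj, of d] by (simp add: o_def)
qed

lemma slice_powser_zero:
  fixes d :: "(nat \<Rightarrow> nat) \<Rightarrow> real"
  assumes "a \<notin> I" "finite I" "d summable_on supported_on (insert a I)"
    and zero: "\<And>z. \<forall>i\<in>insert a I. 0 < z i \<and> z i < 1 \<Longrightarrow>
      (\<Sum>\<^sub>\<infinity>n\<in>supported_on (insert a I). d n * (\<Prod>i\<in>insert a I. z i ^ n i)) = 0"
    and z: "\<forall>i\<in>I. 0 < z i \<and> z i < 1"
  shows "(\<Sum>\<^sub>\<infinity>n\<in>supported_on I. d (n(a := m)) * (\<Prod>i\<in>I. z i ^ n i)) = 0"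
proof -
  define c where "c m = (\<Sum>\<^sub>\<infinity>n\<in>supported_on I. d (n(a := m)) * (\<Prod>i\<in>I. z i ^ n i))" for m
  have "(\<lambda>m. c m * x ^ m) sums 0" if x: "0 < x" "x < 1" for x
  proof -
    let ?z = "z(a := x)"
    have z': "\<forall>i\<in>insert a I. 0 < ?z i \<and> ?z i < 1"
      using z x by auto
    have "(\<Prod>i\<in>I. ?z i ^ n i) = (\<Prod>i\<in>I. z i ^ n i)" for n
      using assms(1) by (intro prod.cong) auto
    then have c_eq: "(\<Sum>\<^sub>\<infinity>n\<in>supported_on I. d (n(a := m)) * (\<Prod>i\<in>I. ?z i ^ n i)) = c m" for m
      by (simp add: c_def)
    have "\<forall>i\<in>insert a I. \<bar>?z i\<bar> \<le> 1"
      using z' by fastforce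
    from has_sum_powser_split_variable[OF assms(1-3) this]
    have "((\<lambda>m. c m * x ^ m) has_sum
        (\<Sum>\<^sub>\<infinity>n\<in>supported_on (insert a I). d n * (\<Prod>i\<in>insert a I. ?z i ^ n i))) UNIV"
      by (simp only: c_eq fun_upd_same)
    then show ?thesis
      unfolding zero[OF z'] by (rule has_sum_imp_sums)
  qed
  then have "c m = 0"
    by (rule powser_zero_on_unit_interval_imp_coeff_zero)
  then show ?thesis
    by (simp add: c_def)
qed

lemma multivariate_powser_zero_imp_coeff_zero:
  fixes d :: "(nat \<Rightarrow> nat) \<Rightarrow> real"
  assumes "finite I" "d summable_on supported_on I"
    "\<And>z. \<forall>i\<in>I. 0 < z i \<and> z i < 1 \<Longrightarrow> (\<Sum>\<^sub>\<infinity>n\<in>supported_on I. d n * (\<Prod>i\<in>I. z i ^ n i)) = 0"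
    "n \<in> supported_on I"
  shows "d n = 0"
  using assms
proof (induction I arbitrary: d n rule: finite_induct)
  case empty
  have support: "supported_on {} = {\<lambda>_. 0}"
    by (auto simp: supported_on_def)
  have "(\<Sum>\<^sub>\<infinity>n\<in>supported_on {}. d n) = 0"
    using empty.prems(2)[of "\<lambda>_. 0"] by simp
  then have "d (\<lambda>_. 0) = 0"
    unfolding support by simp
  moreover have "n = (\<lambda>_. 0)"
    using empty.prems(3) unfolding support by blast
  ultimately show ?case
    by simp
next
  case (insert a I)
  have slice_zero: "d (n'(a := m)) = 0" if "n' \<in> supported_on I" for m n'
  proof (rule insert.IH[OF _ _ that])
    show "(\<lambda>n'. d (n'(a := m))) summable_on supported_on I"
      using insert.hyps(2) insert.prems(1) by (rule summable_on_slice)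
  next
    show "(\<Sum>\<^sub>\<infinity>n'\<in>supported_on I. d (n'(a := m)) * (\<Prod>i\<in>I. z i ^ n' i)) = 0"
      if "\<forall>i\<in>I. 0 < z i \<and> z i < 1" for z
      using insert.hyps(2,1) insert.prems(1,2) that by (rule slice_powser_zero)
  qed
  have "n(a := 0) \<in> supported_on I"
    using insert.prems(3) by (auto simp: supported_on_def)
  from slice_zero[OF this, of "n a"] show ?case
    by (simp only: fun_upd_upd fun_upd_triv)
qed

section \<open>Binomial and multinomial series\<close>

lemma uminus_notin_nonpos_Ints:
  fixes \<alpha> :: real
  assumes "0 < \<alpha>" "\<alpha> < 1"
  shows "- \<alpha> \<notin> \<int>\<^sub>\<le>\<^sub>0"
proof
  assume "- \<alpha> \<in> \<int>\<^sub>\<le>\<^sub>0"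
  then obtain n :: int where "- \<alpha> = of_int n"
    by (auto elim!: nonpos_Ints_cases)
  with assms have "real_of_int n < real_of_int 0" "real_of_int (-1) < real_of_int n"
    by auto
  then show False
    by (simp only: of_int_less_iff)
qed

text \<open>The binomial series of \<open>(1 - x) powr \<alpha>\<close>, with \<open>\<alpha> gchoose N\<close> rewritten through
  \<open>pochhammer (- \<alpha>) N = Gamma (N - \<alpha>) / Gamma (- \<alpha>)\<close>.\<close>
lemma Gamma_binomial_series:
  fixes \<alpha> x :: real
  assumes \<alpha>: "- \<alpha> \<notin> \<int>\<^sub>\<le>\<^sub>0" and x: "\<bar>x\<bar> < 1"
  shows "(\<lambda>N. Gamma (real N - \<alpha>) * x ^ N / fact N) sums (Gamma (- \<alpha>) * (1 - x) powr \<alpha>)"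
proof -
  have "(\<lambda>N. (\<alpha> gchoose N) * (- x) ^ N) sums (1 - x) powr \<alpha>"
    using gen_binomial_real[of "- x" \<alpha>] x by simp
  then have "(\<lambda>N. Gamma (- \<alpha>) * ((\<alpha> gchoose N) * (- x) ^ N)) sums (Gamma (- \<alpha>) * (1 - x) powr \<alpha>)"
    by (rule sums_mult)
  moreover have "Gamma (- \<alpha>) * ((\<alpha> gchoose N) * (- x) ^ N) = Gamma (real N - \<alpha>) * x ^ N / fact N" for N
  proof -
    have "(\<alpha> gchoose N) * (- x) ^ N = ((- 1) ^ N * (- x) ^ N) * pochhammer (- \<alpha>) N / fact N"
      by (simp add: gbinomial_pochhammer)
    also have "(- 1) ^ N * (- x) ^ N = x ^ N"
      by (simp flip: power_mult_distrib)
    also have "pochhammer (- \<alpha>) N = Gamma (- \<alpha> + real N) / Gamma (- \<alpha>)"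
      using pochhammer_Gamma[OF \<alpha>] by simp
    finally show ?thesis
      using \<alpha> by (simp add: Gamma_eq_zero_iff field_simps)
  qed
  ultimately show ?thesis
    by simp
qed

definition weak_compositions :: "'a set \<Rightarrow> nat \<Rightarrow> ('a \<Rightarrow> nat) set" where
  "weak_compositions P N = {f \<in> PiE P (\<lambda>_. UNIV). sum f P = N}"

lemma finite_weak_compositions:
  assumes "finite P"
  shows "finite (weak_compositions P N)"
proof (rule finite_subset)
  show "weak_compositions P N \<subseteq> PiE P (\<lambda>_. {0..N})"
    using assms by (auto simp: weak_compositions_def PiE_def Pi_def intro: member_le_sum)
  show "finite (PiE P (\<lambda>_. {0..N}))"
    using assms by (simp add: finite_PiE)
qed

lemma sum_weak_compositions_insert:
  assumes "finite P" "a \<notin> P"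
  shows "(\<Sum>f\<in>weak_compositions (insert a P) N. g f) =
    (\<Sum>(m, h)\<in>Sigma {..N} (\<lambda>m. weak_compositions P (N - m)). g (h(a := m)))"
proof (rule sum.reindex_bij_witness[where i = "\<lambda>(m, h). h(a := m)" and j = "\<lambda>f. (f a, f(a := undefined))"])
  fix f
  assume f: "f \<in> weak_compositions (insert a P) N"
  have "sum (f(a := undefined)) P = sum f P"
    using assms by (intro sum.cong) auto
  moreover have "sum f (insert a P) = f a + sum f P"
    using assms by simp
  ultimately show "(f a, f(a := undefined)) \<in> Sigma {..N} (\<lambda>m. weak_compositions P (N - m))"
    using f assms by (auto simp: weak_compositions_def PiE_def extensional_def)
next
  fix p
  assume "p \<in> Sigma {..N} (\<lambda>m. weak_compositions P (N - m))"
  then obtain m h where p: "p = (m, h)" "m \<le> N" "h \<in> weak_compositions P (N - m)"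
    by auto
  then have "h a = undefined"
    using assms by (auto simp: weak_compositions_def PiE_def extensional_def)
  then show "(\<lambda>f. (f a, f(a := undefined))) ((\<lambda>(m, h). h(a := m)) p) = p"
    using p by (auto simp: fun_eq_iff)
  have "sum (h(a := m)) P = sum h P"
    using assms by (intro sum.cong) auto
  then show "(\<lambda>(m, h). h(a := m)) p \<in> weak_compositions (insert a P) N"
    using p assms by (auto simp: weak_compositions_def PiE_def extensional_def)
qed auto

lemma multinomial_theorem_weak_compositions:
  fixes b :: "'a \<Rightarrow> real"
  assumes "finite P"
  shows "(\<Sum>f\<in>weak_compositions P N. \<Prod>p\<in>P. b p ^ f p / fact (f p)) = sum b P ^ N / fact N"
  using assms
proof (induction P arbitrary: N rule: finite_induct)
  case empty
  have "weak_compositions ({} :: 'a set) 0 = {\<lambda>_. undefined}"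
    "weak_compositions ({} :: 'a set) (Suc m) = {}" for m
    by (auto simp: weak_compositions_def)
  then show ?case
    by (cases N) simp_all
next
  case (insert a P)
  let ?G = "\<lambda>P f. \<Prod>p\<in>P. b p ^ f p / fact (f p)"
  have G_upd: "?G (insert a P) (g(a := m)) = b a ^ m / fact m * ?G P g" for g m
  proof -
    have "?G P (g(a := m)) = ?G P g"
      using insert.hyps by (intro prod.cong) auto
    then show ?thesis
      using insert.hyps by simp
  qed
  have "(\<Sum>f\<in>weak_compositions (insert a P) N. ?G (insert a P) f) =
      (\<Sum>(m, g)\<in>Sigma {..N} (\<lambda>m. weak_compositions P (N - m)). ?G (insert a P) (g(a := m)))"
    using insert.hyps by (rule sum_weak_compositions_insert)
  also have "\<dots> = (\<Sum>(m, g)\<in>Sigma {..N} (\<lambda>m. weak_compositions P (N - m)). b a ^ m / fact m * ?G P g)"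
    by (intro sum.cong refl) (simp only: case_prod_unfold G_upd)
  also have "\<dots> = (\<Sum>m\<le>N. b a ^ m / fact m * (\<Sum>g\<in>weak_compositions P (N - m). ?G P g))"
    by (subst sum.Sigma[symmetric]) (auto simp: finite_weak_compositions insert.hyps sum_distrib_left)
  also have "\<dots> = (\<Sum>m\<le>N. of_nat (N choose m) * b a ^ m * sum b P ^ (N - m)) / fact N"
    by (simp add: insert.IH sum_divide_distrib binomial_fact field_simps)
  also have "\<dots> = (b a + sum b P) ^ N / fact N"
    by (simp add: binomial_ring)
  finally show ?case
    using insert.hyps by simp
qed

lemma Gamma_nat_minus_pos:
  fixes \<alpha> :: real
  assumes "N \<noteq> 0" "\<alpha> < 1"
  shows "0 < Gamma (real N - \<alpha>)"
  using assms by (intro Gamma_real_pos) linarith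

lemma has_sum_Gamma_binomial_series:
  fixes \<alpha> x :: real
  assumes \<alpha>: "0 < \<alpha>" "\<alpha> < 1" and x: "0 \<le> x" "x < 1"
  shows "((\<lambda>N. Gamma (real N - \<alpha>) * x ^ N / fact N) has_sum (Gamma (- \<alpha>) * ((1 - x) powr \<alpha> - 1)))
    {N. N \<noteq> 0}"
proof -
  define T where "T = (\<lambda>N :: nat. Gamma (real N - \<alpha>) * x ^ N / fact N)"
  have "T sums (Gamma (- \<alpha>) * (1 - x) powr \<alpha>)"
    unfolding T_def using x by (intro Gamma_binomial_series uminus_notin_nonpos_Ints \<alpha>) simp
  moreover have "\<forall>\<^sub>F N in sequentially. T N \<ge> 0"
    using Gamma_nat_minus_pos[OF _ \<alpha>(2)] x
    by (intro eventually_sequentiallyI[of 1]) (simp add: T_def less_imp_le)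
  ultimately have "(T has_sum (Gamma (- \<alpha>) * (1 - x) powr \<alpha>)) UNIV"
    by (rule sums_nonneg_imp_has_sum_strong)
  from has_sum_Diff[OF this has_sum_finite[of "{0}" T]]
  have "(T has_sum (Gamma (- \<alpha>) * (1 - x) powr \<alpha> - T 0)) (UNIV - {0})"
    by simp
  also have "Gamma (- \<alpha>) * (1 - x) powr \<alpha> - T 0 = Gamma (- \<alpha>) * ((1 - x) powr \<alpha> - 1)"
    by (simp add: T_def algebra_simps)
  also have "UNIV - {0} = {N :: nat. N \<noteq> 0}"
    by auto
  finally show ?thesis
    by (simp only: T_def)
qed

text \<open>Grouping the families by their total, the multinomial theorem reduces this to the previous
  series at \<open>x = sum b P\<close>.\<close>
lemma has_sum_Gamma_multinomial:
  fixes b :: "'a \<Rightarrow> real" and \<alpha> :: real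
  assumes \<alpha>: "0 < \<alpha>" "\<alpha> < 1" and "finite P"
    and b: "\<forall>p\<in>P. 0 \<le> b p" "sum b P < 1"
  shows "((\<lambda>f. Gamma (real (sum f P) - \<alpha>) * (\<Prod>p\<in>P. b p ^ f p / fact (f p)))
          has_sum (Gamma (- \<alpha>) * ((1 - sum b P) powr \<alpha> - 1))) {f \<in> PiE P (\<lambda>_. UNIV). sum f P \<noteq> 0}"
proof (rule has_sum_of_fiber_sums_nonneg[where h = "\<lambda>f. sum f P" and B = "{N. N \<noteq> 0}"])
  let ?A = "{f \<in> PiE P (\<lambda>_. UNIV). sum f P \<noteq> 0}"
  let ?T = "\<lambda>f. Gamma (real (sum f P) - \<alpha>) * (\<Prod>p\<in>P. b p ^ f p / fact (f p))"
  have fiber: "{f\<in>?A. sum f P = N} = weak_compositions P N" if "N \<noteq> 0" for N :: nat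
    using that by (auto simp: weak_compositions_def)
  show "finite {f\<in>?A. sum f P = N}" if "N \<in> {N. N \<noteq> 0}" for N :: nat
  proof -
    have "N \<noteq> 0"
      using that by simp
    show ?thesis
      unfolding fiber[OF \<open>N \<noteq> 0\<close>] by (rule finite_weak_compositions[OF assms(3)])
  qed
  show "sum f P \<in> {N :: nat. N \<noteq> 0}" if "f \<in> ?A" for f
    using that by simp
  show "0 \<le> ?T f" if "f \<in> ?A" for f
    using that b Gamma_nat_minus_pos[OF _ \<alpha>(2), of "sum f P"]
    by (auto intro!: mult_nonneg_nonneg prod_nonneg)
  have fiber_sum: "(\<Sum>f\<in>{f\<in>?A. sum f P = N}. ?T f) = Gamma (real N - \<alpha>) * sum b P ^ N / fact N"
    if "N \<in> {N. N \<noteq> 0}" for N :: nat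
  proof -
    have "(\<Sum>f\<in>{f\<in>?A. sum f P = N}. ?T f)
        = (\<Sum>f\<in>weak_compositions P N. Gamma (real N - \<alpha>) * (\<Prod>p\<in>P. b p ^ f p / fact (f p)))"
      using that unfolding fiber[of N] by (intro sum.cong) (auto simp: weak_compositions_def)
    then show ?thesis
      by (simp add: sum_distrib_left[symmetric] multinomial_theorem_weak_compositions[OF assms(3)])
  qed
  have "((\<lambda>N. Gamma (real N - \<alpha>) * sum b P ^ N / fact N) has_sum (Gamma (- \<alpha>) * ((1 - sum b P) powr \<alpha> - 1)))
      {N. N \<noteq> 0}"
    using b by (intro has_sum_Gamma_binomial_series \<alpha>) (auto intro: sum_nonneg)
  then show "((\<lambda>N. \<Sum>f\<in>{f\<in>?A. sum f P = N}. ?T f) has_sum (Gamma (- \<alpha>) * ((1 - sum b P) powr \<alpha> - 1)))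
      {N. N \<noteq> 0}"
    by (rule has_sum_cong[THEN iffD2, rotated]) (simp only: fiber_sum)
qed

lemma has_sum_prod_exp_series:
  fixes z e :: "'a \<Rightarrow> real"
  assumes "finite P" "\<forall>p\<in>P. 0 \<le> z p" "\<forall>p\<in>P. 0 \<le> e p"
  shows "((\<lambda>f. \<Prod>p\<in>P. z p ^ f p / fact (f p) * e p) has_sum (\<Prod>p\<in>P. exp (z p) * e p)) (PiE P (\<lambda>_. UNIV))"
proof (rule has_sum_prod_PiE_nonneg[OF assms(1)])
  fix p
  assume p: "p \<in> P"
  have "(\<lambda>n. z p ^ n / fact n) sums exp (z p)"
    using exp_converges[of "z p"] by (simp add: scaleR_conv_of_real divide_inverse mult.commute)
  then have "(\<lambda>n. z p ^ n / fact n * e p) sums (exp (z p) * e p)"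
    by (rule sums_mult2)
  then show "((\<lambda>n. z p ^ n / fact n * e p) has_sum (exp (z p) * e p)) UNIV"
    by (rule sums_nonneg_imp_has_sum) (use assms p in auto)
  show "0 \<le> z p ^ n / fact n * e p" for n
    using assms p by auto
qed

section \<open>Laplace transforms of weights on the lattice\<close>

definition laplace_kernel :: "nat \<Rightarrow> (nat \<Rightarrow> real) \<Rightarrow> (nat \<Rightarrow> nat) \<Rightarrow> real" where
  "laplace_kernel q u n = exp (- (\<Sum>i=1..q. u i * real (n i)))"

lemma laplace_kernel_bounds:
  assumes "\<forall>i. 0 \<le> u i"
  shows "0 < laplace_kernel q u n" "laplace_kernel q u n \<le> 1"
proof -
  have "0 \<le> (\<Sum>i=1..q. u i * real (n i))"
    using assms by (intro sum_nonneg) simp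
  then show "0 < laplace_kernel q u n" "laplace_kernel q u n \<le> 1"
    by (simp_all add: laplace_kernel_def)
qed

lemma laplace_kernel_zero [simp]: "laplace_kernel q (\<lambda>_. 0) n = 1" "laplace_kernel q u (\<lambda>_. 0) = 1"
  by (simp_all add: laplace_kernel_def)

lemma laplace_kernel_minus_ln:
  assumes "\<forall>i\<in>{1..q}. 0 < z i \<and> u i = - ln (z i)"
  shows "laplace_kernel q u n = (\<Prod>i=1..q. z i ^ n i)"
proof -
  have "laplace_kernel q u n = exp (\<Sum>i=1..q. real (n i) * ln (z i))"
    unfolding laplace_kernel_def using assms by (simp add: mult.commute flip: sum_negf)
  also have "\<dots> = (\<Prod>i=1..q. exp (real (n i) * ln (z i)))"
    by (simp add: exp_sum)
  also have "\<dots> = (\<Prod>i=1..q. z i ^ n i)"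
    using assms by (intro prod.cong refl) (simp add: exp_of_nat_mult)
  finally show ?thesis .
qed

lemma laplace_transform_zero_imp_zero:
  fixes d :: "(nat \<Rightarrow> nat) \<Rightarrow> real"
  assumes zero: "\<And>u. \<forall>i. 0 \<le> u i \<Longrightarrow> ((\<lambda>n. d n * laplace_kernel q u n) has_sum 0) (lattice q)"
    and "n \<in> lattice q"
  shows "d n = 0"
proof (rule multivariate_powser_zero_imp_coeff_zero[where I = "{1..q}" and d = d])
  show "d summable_on supported_on {1..q}"
    using zero[of "\<lambda>_. 0"] by (auto simp: summable_on_def lattice_eq_supported_on)
  show "(\<Sum>\<^sub>\<infinity>n\<in>supported_on {1..q}. d n * (\<Prod>i\<in>{1..q}. z i ^ n i)) = 0"
    if z: "\<forall>i\<in>{1..q}. 0 < z i \<and> z i < 1" for z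
  proof -
    define u where "u i = (if i \<in> {1..q} then - ln (z i) else 0)" for i
    have "\<forall>i. 0 \<le> u i"
      using z by (auto simp: u_def less_imp_le)
    from zero[OF this] have "(\<Sum>\<^sub>\<infinity>n\<in>lattice q. d n * laplace_kernel q u n) = 0"
      by (rule infsumI)
    moreover have "laplace_kernel q u n = (\<Prod>i=1..q. z i ^ n i)" for n
      using z by (intro laplace_kernel_minus_ln) (simp add: u_def)
    ultimately show ?thesis
      by (simp add: lattice_eq_supported_on)
  qed
qed (use assms(2) in \<open>simp_all add: lattice_eq_supported_on\<close>)

lemma has_sum_laplace_kernel_mult:
  assumes "\<forall>i. 0 \<le> u i" "\<forall>n. 0 \<le> v n" "v summable_on UNIV" "\<And>n. v n \<noteq> 0 \<Longrightarrow> n \<in> lattice q"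
  shows "((\<lambda>n. laplace_kernel q u n * v n) has_sum (\<Sum>\<^sub>\<infinity>n. laplace_kernel q u n * v n)) (lattice q)"
proof -
  have "\<forall>n. 0 \<le> laplace_kernel q u n \<and> laplace_kernel q u n \<le> 1"
    using laplace_kernel_bounds[OF assms(1)] by (simp add: less_imp_le)
  from has_sum_infsum[OF infsum_one_minus_mult(1)[OF assms(2,3) this]] show ?thesis
    by (rule has_sum_cong_neutral[THEN iffD1, rotated -1]) (use assms(4) in auto)
qed

text \<open>The difference of two weights with the same exponent, corrected by a constant at the origin,
  has vanishing Laplace transform.\<close>
lemma laplace_exponent_determines_weights:
  fixes w w' :: "(nat \<Rightarrow> nat) \<Rightarrow> real"
  assumes nonneg: "\<forall>n. 0 \<le> w n" "\<forall>n. 0 \<le> w' n"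
    and support: "\<And>n. w n \<noteq> 0 \<Longrightarrow> n \<in> lattice q \<and> n \<noteq> (\<lambda>_. 0)"
      "\<And>n. w' n \<noteq> 0 \<Longrightarrow> n \<in> lattice q \<and> n \<noteq> (\<lambda>_. 0)"
    and summable: "w summable_on UNIV" "w' summable_on UNIV"
    and exponent_eq: "\<And>u. \<forall>i. 0 \<le> u i \<Longrightarrow>
      (\<Sum>\<^sub>\<infinity>n. (1 - laplace_kernel q u n) * w n) = (\<Sum>\<^sub>\<infinity>n. (1 - laplace_kernel q u n) * w' n)"
  shows "w = w'"
proof -
  let ?E = "laplace_kernel q"
  define C where "C = (\<Sum>\<^sub>\<infinity>n. w n) - (\<Sum>\<^sub>\<infinity>n. w' n)"
  define d where "d n = w n - w' n - (if n = (\<lambda>_. 0) then C else 0)" for n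
  have "((\<lambda>n. d n * ?E u n) has_sum 0) (lattice q)" if u: "\<forall>i. 0 \<le> u i" for u
  proof -
    have "((\<lambda>n. (if n = (\<lambda>_. 0) then C else 0) * ?E u n) has_sum C) {\<lambda>_. 0}"
      by (rule has_sum_finiteI) simp_all
    then have "((\<lambda>n. (if n = (\<lambda>_. 0) then C else 0) * ?E u n) has_sum C) (lattice q)"
      by (rule has_sum_cong_neutral[THEN iffD1, rotated -1]) (auto simp: lattice_def)
    with has_sum_laplace_kernel_mult[OF u nonneg(1) summable(1)]
      has_sum_laplace_kernel_mult[OF u nonneg(2) summable(2)] support
    have "((\<lambda>n. ?E u n * w n - ?E u n * w' n - (if n = (\<lambda>_. 0) then C else 0) * ?E u n)
        has_sum ((\<Sum>\<^sub>\<infinity>n. ?E u n * w n) - (\<Sum>\<^sub>\<infinity>n. ?E u n * w' n) - C)) (lattice q)"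
      by (intro has_sum_diff) blast+
    moreover have "\<forall>n. 0 \<le> ?E u n \<and> ?E u n \<le> 1"
      using laplace_kernel_bounds[OF u] by (simp add: less_imp_le)
    then have "(\<Sum>\<^sub>\<infinity>n. ?E u n * w n) - (\<Sum>\<^sub>\<infinity>n. ?E u n * w' n) = C"
      using exponent_eq[OF u] infsum_one_minus_mult(2)[OF nonneg(1) summable(1)]
        infsum_one_minus_mult(2)[OF nonneg(2) summable(2)]
      by (simp add: C_def)
    moreover have "(\<lambda>n. ?E u n * w n - ?E u n * w' n - (if n = (\<lambda>_. 0) then C else 0) * ?E u n)
        = (\<lambda>n. d n * ?E u n)"
      by (simp add: fun_eq_iff d_def algebra_simps)
    ultimately show ?thesis
      by simp
  qed
  then have d_zero: "d n = 0" if "n \<in> lattice q" for n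
    using that by (rule laplace_transform_zero_imp_zero)
  show ?thesis
  proof
    fix n
    show "w n = w' n"
    proof (cases "n \<in> lattice q \<and> n \<noteq> (\<lambda>_. 0)")
      case True
      then show ?thesis
        using d_zero[of n] by (simp add: d_def)
    next
      case False
      then have "w n = 0" "w' n = 0"
        using support[of n] by blast+
      then show ?thesis
        by simp
    qed
  qed
qed

lemma countable_lattice: "countable (lattice q)"
proof -
  have "lattice q \<subseteq> (\<lambda>V i. if i \<in> {1..q} then V i else 0) ` PiE {1..q} (\<lambda>_. UNIV :: nat set)"
  proof
    fix n
    assume "n \<in> lattice q"
    then have "n = (\<lambda>i. if i \<in> {1..q} then restrict n {1..q} i else 0)"
      by (auto simp: lattice_def fun_eq_iff)
    then show "n \<in> (\<lambda>V i. if i \<in> {1..q} then V i else 0) ` PiE {1..q} (\<lambda>_. UNIV)"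
      by (intro image_eqI[where x = "restrict n {1..q}"]) simp_all
  qed
  moreover have "countable (PiE {1..q} (\<lambda>_. UNIV :: nat set))"
    by (rule countable_PiE) auto
  ultimately show ?thesis
    by (rule countable_subset[OF _ countable_image])
qed

lemma infinite_lattice:
  assumes "q \<ge> 1"
  shows "infinite (lattice q)"
proof -
  let ?axis = "\<lambda>m :: nat. \<lambda>i :: nat. if i = 1 then m else 0"
  have "inj ?axis"
    by (auto simp: inj_def fun_eq_iff)
  then have "infinite (range ?axis)"
    by (rule range_inj_infinite)
  moreover have "range ?axis \<subseteq> lattice q"
    using assms by (auto simp: lattice_def)
  ultimately show ?thesis
    by (rule infinite_super[rotated])
qed

section \<open>The MGCP as a compound Poisson process\<close>

lemma finite_Omega: "finite (Omega k m)"
proof (rule finite_subset)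
  show "Omega k m \<subseteq> {f. \<forall>x. (x \<in> {1..k} \<longrightarrow> f x \<in> {0..m}) \<and> (x \<notin> {1..k} \<longrightarrow> f x = 0)}"
  proof safe
    fix v :: "nat \<Rightarrow> nat" and x
    assume v: "v \<in> Omega k m" and x: "x \<in> {1..k}"
    then have "v x \<le> x * v x"
      by simp
    also have "\<dots> \<le> (\<Sum>j=1..k. j * v j)"
      using x by (intro member_le_sum) auto
    finally show "v x \<in> {0..m}"
      using v by (simp add: Omega_def)
  qed (auto simp: Omega_def)
  show "finite {f. \<forall>x. (x \<in> {1..k} \<longrightarrow> f x \<in> {0..m}) \<and> (x \<notin> {1..k} \<longrightarrow> (f x :: nat) = 0)}"
    by (rule finite_set_of_finite_funs) auto
qed

lemma bij_betw_restrict_OmegaFam: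
  "bij_betw (\<lambda>v. restrict v {1..q}) (OmegaFam q k n) (PiE {1..q} (\<lambda>i. Omega (k i) (n i)))"
proof (rule bij_betwI[where g = "\<lambda>V i. if i \<in> {1..q} then V i else (\<lambda>_. 0)"])
  show "(\<lambda>V i. if i \<in> {1..q} then V i else (\<lambda>_. 0)) (restrict v {1..q}) = v"
    if "v \<in> OmegaFam q k n" for v
    using that by (auto simp: OmegaFam_def fun_eq_iff)
  show "restrict (\<lambda>i. if i \<in> {1..q} then V i else (\<lambda>_. 0)) {1..q} = V"
    if "V \<in> PiE {1..q} (\<lambda>i. Omega (k i) (n i))" for V
    using that by (auto simp: PiE_def extensional_def)
qed (auto simp: OmegaFam_def)

text \<open>A family \<open>f \<in> jump_counts\<close> records the number \<open>f (i, j)\<close> of jumps of size \<open>j\<close> made by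
  the \<open>i\<close>-th component; \<open>compound_state f\<close> is the state they lead to.\<close>
locale mgcp_jumps =
  fixes q :: nat and k :: "nat \<Rightarrow> nat"
begin

definition jump_types :: "(nat \<times> nat) set" where
  "jump_types = Sigma {1..q} (\<lambda>i. {1..k i})"

definition jump_counts :: "(nat \<times> nat \<Rightarrow> nat) set" where
  "jump_counts = PiE jump_types (\<lambda>_. UNIV)"

definition count_matrix :: "(nat \<times> nat \<Rightarrow> nat) \<Rightarrow> nat \<Rightarrow> nat \<Rightarrow> nat" where
  "count_matrix f = (\<lambda>i j. if (i, j) \<in> jump_types then f (i, j) else 0)"

definition compound_state :: "(nat \<times> nat \<Rightarrow> nat) \<Rightarrow> nat \<Rightarrow> nat" where
  "compound_state f = (\<lambda>i. \<Sum>j=1..k i. j * count_matrix f i j)"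

lemma finite_jump_types: "finite jump_types"
  by (simp add: jump_types_def)

lemma compound_state_in_lattice: "compound_state f \<in> lattice q"
  by (auto simp: lattice_def compound_state_def count_matrix_def jump_types_def)

lemma count_matrix_in_OmegaFam:
  assumes "compound_state f = n"
  shows "count_matrix f \<in> OmegaFam q k n"
proof -
  have "count_matrix f i \<in> Omega (k i) (n i)" if "i \<in> {1..q}" for i
    using that unfolding Omega_def assms[symmetric] compound_state_def
    by (auto simp: count_matrix_def jump_types_def)
  moreover have "count_matrix f i = (\<lambda>_. 0)" if "i \<notin> {1..q}" for i
    using that by (auto simp: count_matrix_def jump_types_def)
  ultimately show ?thesis
    by (auto simp: OmegaFam_def)
qed

lemma bij_betw_count_matrix:
  assumes n: "n \<in> lattice q"
  shows "bij_betw count_matrix {f\<in>jump_counts. compound_state f = n} (OmegaFam q k n)"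
proof (rule bij_betwI[where g = "\<lambda>v. restrict (\<lambda>p. v (fst p) (snd p)) jump_types"])
  show "count_matrix \<in> {f\<in>jump_counts. compound_state f = n} \<rightarrow> OmegaFam q k n"
    using count_matrix_in_OmegaFam by auto
  have count_matrix_restrict: "count_matrix (restrict (\<lambda>p. v (fst p) (snd p)) jump_types) = v"
    if "v \<in> OmegaFam q k n" for v
    using that by (auto simp: count_matrix_def fun_eq_iff OmegaFam_def Omega_def jump_types_def)
  then show "count_matrix (restrict (\<lambda>p. v (fst p) (snd p)) jump_types) = v"
    if "v \<in> OmegaFam q k n" for v
    using that .
  show "(\<lambda>v. restrict (\<lambda>p. v (fst p) (snd p)) jump_types)
      \<in> OmegaFam q k n \<rightarrow> {f\<in>jump_counts. compound_state f = n}"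
  proof
    fix v
    assume v: "v \<in> OmegaFam q k n"
    have "compound_state (restrict (\<lambda>p. v (fst p) (snd p)) jump_types) i = n i" for i
      using v n unfolding compound_state_def count_matrix_restrict[OF v]
      by (cases "i \<in> {1..q}") (auto simp: OmegaFam_def Omega_def lattice_def)
    then show "restrict (\<lambda>p. v (fst p) (snd p)) jump_types \<in> {f\<in>jump_counts. compound_state f = n}"
      by (auto simp: jump_counts_def)
  qed
  show "restrict (\<lambda>p. count_matrix f (fst p) (snd p)) jump_types = f"
    if "f \<in> {f\<in>jump_counts. compound_state f = n}" for f
    using that by (auto simp: jump_counts_def count_matrix_def fun_eq_iff PiE_def extensional_def)
qed

lemma sum_OmegaFam_eq_sum_count_matrix:
  assumes "n \<in> lattice q"
  shows "(\<Sum>v\<in>OmegaFam q k n. H v) = (\<Sum>f\<in>{f\<in>jump_counts. compound_state f = n}. H (count_matrix f))"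
  using sum.reindex_bij_betw[OF bij_betw_count_matrix[OF assms], of H] by simp

lemma finite_compound_state_fiber: "finite {f\<in>jump_counts. compound_state f = n}"
proof (rule finite_subset)
  show "{f\<in>jump_counts. compound_state f = n} \<subseteq> PiE jump_types (\<lambda>p. {0..n (fst p)})"
  proof (clarsimp simp: jump_counts_def)
    fix f :: "nat \<times> nat \<Rightarrow> nat"
    assume f: "f \<in> PiE jump_types (\<lambda>_. UNIV)"
    show "f \<in> PiE jump_types (\<lambda>p. {0..compound_state f (fst p)})"
    proof (auto simp: PiE_iff)
      fix i j
      assume ij: "(i, j) \<in> jump_types"
      then have "f (i, j) \<le> j * count_matrix f i j"
        by (auto simp: count_matrix_def jump_types_def)
      also have "\<dots> \<le> compound_state f i"
        unfolding compound_state_def using ij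
        by (intro member_le_sum[where f = "\<lambda>j. j * count_matrix f i j"]) (auto simp: jump_types_def)
      finally show "f (i, j) \<le> compound_state f i" .
    next
      show "f \<in> extensional jump_types"
        using f by (simp add: PiE_def)
    qed
  qed
  show "finite (PiE jump_types (\<lambda>p. {0..n (fst p)}))"
    by (simp add: finite_PiE finite_jump_types)
qed

lemma prod_count_matrix:
  assumes "f \<in> jump_counts"
  shows "(\<Prod>i=1..q. \<Prod>j=1..k i. G i j (count_matrix f i j)) = (\<Prod>p\<in>jump_types. G (fst p) (snd p) (f p))"
proof -
  have "(\<Prod>i=1..q. \<Prod>j=1..k i. G i j (count_matrix f i j))
      = (\<Prod>p\<in>jump_types. G (fst p) (snd p) (count_matrix f (fst p) (snd p)))"
    unfolding jump_types_def by (simp add: prod.Sigma split_def)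
  also have "\<dots> = (\<Prod>p\<in>jump_types. G (fst p) (snd p) (f p))"
    by (intro prod.cong) (auto simp: count_matrix_def)
  finally show ?thesis .
qed

lemma sum_count_matrix:
  assumes "f \<in> jump_counts"
  shows "(\<Sum>i=1..q. \<Sum>j=1..k i. count_matrix f i j) = sum f jump_types"
proof -
  have "(\<Sum>i=1..q. \<Sum>j=1..k i. count_matrix f i j) = (\<Sum>p\<in>jump_types. count_matrix f (fst p) (snd p))"
    unfolding jump_types_def by (simp add: sum.Sigma split_def)
  also have "\<dots> = sum f jump_types"
    by (intro sum.cong) (auto simp: count_matrix_def)
  finally show ?thesis .
qed

lemma compound_state_eq_0_iff:
  assumes "f \<in> jump_counts"
  shows "compound_state f = (\<lambda>_. 0) \<longleftrightarrow> sum f jump_types = 0"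
proof -
  have "compound_state f = (\<lambda>_. 0) \<longleftrightarrow> (\<forall>p\<in>jump_types. f p = 0)"
    by (auto simp: compound_state_def fun_eq_iff count_matrix_def jump_types_def)
  also have "\<dots> \<longleftrightarrow> sum f jump_types = 0"
    by (simp add: finite_jump_types)
  finally show ?thesis .
qed

lemma laplace_kernel_compound_state:
  assumes "f \<in> jump_counts"
  shows "laplace_kernel q u (compound_state f) = (\<Prod>p\<in>jump_types. exp (- (real (snd p) * u (fst p))) ^ f p)"
proof -
  have "(\<Sum>i=1..q. u i * real (compound_state f i))
      = (\<Sum>i=1..q. \<Sum>j=1..k i. real j * u i * real (count_matrix f i j))"
    by (simp add: compound_state_def sum_distrib_left mult_ac)
  also have "\<dots> = (\<Sum>p\<in>jump_types. real (snd p) * u (fst p) * real (count_matrix f (fst p) (snd p)))"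
    unfolding jump_types_def by (simp add: sum.Sigma split_def)
  also have "\<dots> = (\<Sum>p\<in>jump_types. real (snd p) * u (fst p) * real (f p))"
    by (intro sum.cong) (auto simp: count_matrix_def)
  finally show ?thesis
    by (simp add: laplace_kernel_def exp_sum finite_jump_types exp_of_nat_mult[symmetric] mult_ac
        flip: sum_negf)
qed

lemma mgcp_pmf_eq_sum_jump_counts:
  assumes "n \<in> lattice q"
  shows "mgcp_pmf q k lam x n = (\<Sum>f\<in>{f\<in>jump_counts. compound_state f = n}.
    \<Prod>p\<in>jump_types. (lam (fst p) (snd p) * x) ^ f p / fact (f p) * exp (- lam (fst p) (snd p) * x))"
proof -
  define T where "T i j m = (lam i j * x) ^ m / fact m * exp (- lam i j * x)" for i j m
  have "mgcp_pmf q k lam x n = (\<Prod>i=1..q. \<Sum>v\<in>Omega (k i) (n i). \<Prod>j=1..k i. T i j (v j))"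
    by (simp add: mgcp_pmf_def T_def)
  also have "\<dots> = (\<Sum>V\<in>PiE {1..q} (\<lambda>i. Omega (k i) (n i)). \<Prod>i=1..q. \<Prod>j=1..k i. T i j (V i j))"
    by (rule prod_sum_PiE) (auto simp: finite_Omega)
  also have "\<dots> = (\<Sum>v\<in>OmegaFam q k n. \<Prod>i=1..q. \<Prod>j=1..k i. T i j (v i j))"
    by (subst sum.reindex_bij_betw[OF bij_betw_restrict_OmegaFam, symmetric]) (auto intro!: sum.cong)
  also have "\<dots> = (\<Sum>f\<in>{f\<in>jump_counts. compound_state f = n}.
      \<Prod>i=1..q. \<Prod>j=1..k i. T i j (count_matrix f i j))"
    using assms by (rule sum_OmegaFam_eq_sum_count_matrix)
  also have "\<dots> = (\<Sum>f\<in>{f\<in>jump_counts. compound_state f = n}. \<Prod>p\<in>jump_types. T (fst p) (snd p) (f p))"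
    by (intro sum.cong refl prod_count_matrix) simp
  finally show ?thesis
    by (simp add: T_def)
qed

end

locale mgcp = mgcp_jumps +
  fixes lam :: "nat \<Rightarrow> nat \<Rightarrow> real"
  assumes lam_pos: "\<forall>i\<in>{1..q}. \<forall>j\<in>{1..k i}. lam i j > 0"
begin

definition rate :: "nat \<times> nat \<Rightarrow> real" where
  "rate p = lam (fst p) (snd p)"

definition jump_discount :: "(nat \<Rightarrow> real) \<Rightarrow> nat \<times> nat \<Rightarrow> real" where
  "jump_discount u p = exp (- (real (snd p) * u (fst p)))"

definition mgcp_exponent :: "(nat \<Rightarrow> real) \<Rightarrow> real" where
  "mgcp_exponent u = (\<Sum>p\<in>jump_types. rate p * (1 - jump_discount u p))"

lemma rate_pos: "p \<in> jump_types \<Longrightarrow> rate p > 0"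
  using lam_pos by (auto simp: rate_def jump_types_def)

lemma total_rate_eq_sum_rate: "total_rate q k lam = sum rate jump_types"
  unfolding total_rate_def jump_types_def rate_def by (simp add: sum.Sigma split_def)

lemma jump_discount_bounds:
  assumes "\<forall>i. 0 \<le> u i"
  shows "0 < jump_discount u p" "jump_discount u p \<le> 1"
  using assms by (simp_all add: jump_discount_def)

lemma laplace_kernel_eq_prod_jump_discount:
  assumes "f \<in> jump_counts"
  shows "laplace_kernel q u (compound_state f) = (\<Prod>p\<in>jump_types. jump_discount u p ^ f p)"
  using laplace_kernel_compound_state[OF assms] by (simp add: jump_discount_def)

lemma mgcp_exponent_nonneg:
  assumes "\<forall>i. 0 \<le> u i"
  shows "0 \<le> mgcp_exponent u"
  unfolding mgcp_exponent_def
  using rate_pos jump_discount_bounds[OF assms] by (intro sum_nonneg) (simp add: less_imp_le)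

lemma mgcp_exponent_zero [simp]: "mgcp_exponent (\<lambda>_. 0) = 0"
  by (simp add: mgcp_exponent_def jump_discount_def)

lemma has_sum_mgcp_pmf_laplace:
  assumes u: "\<forall>i. 0 \<le> u i" and x: "0 \<le> x"
  shows "((\<lambda>n. mgcp_pmf q k lam x n * laplace_kernel q u n) has_sum exp (- mgcp_exponent u * x)) (lattice q)"
proof -
  define z where "z p = rate p * x * jump_discount u p" for p
  define e where "e p = exp (- rate p * x)" for p
  let ?Poisson = "\<lambda>f. \<Prod>p\<in>jump_types. (lam (fst p) (snd p) * x) ^ f p / fact (f p) * exp (- lam (fst p) (snd p) * x)"
  have "\<forall>p\<in>jump_types. 0 \<le> z p"
    using rate_pos jump_discount_bounds[OF u] x by (simp add: z_def less_imp_le)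
  moreover have "\<forall>p\<in>jump_types. 0 \<le> e p"
    by (simp add: e_def)
  ultimately have "((\<lambda>n. \<Sum>f\<in>{f\<in>jump_counts. compound_state f = n}. \<Prod>p\<in>jump_types. z p ^ f p / fact (f p) * e p)
      has_sum (\<Prod>p\<in>jump_types. exp (z p) * e p)) (lattice q)"
    using has_sum_prod_exp_series[OF finite_jump_types, folded jump_counts_def]
    by (intro has_sum_fiber_sums) (auto simp: compound_state_in_lattice finite_compound_state_fiber)
  moreover have "(\<Sum>f\<in>{f\<in>jump_counts. compound_state f = n}. \<Prod>p\<in>jump_types. z p ^ f p / fact (f p) * e p)
      = mgcp_pmf q k lam x n * laplace_kernel q u n" if n: "n \<in> lattice q" for n
  proof -
    have "(\<Prod>p\<in>jump_types. z p ^ f p / fact (f p) * e p) = ?Poisson f * laplace_kernel q u (compound_state f)"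
      if "f \<in> jump_counts" for f
      using that
      by (simp add: laplace_kernel_eq_prod_jump_discount z_def e_def rate_def power_mult_distrib
          prod.distrib[symmetric] mult_ac)
    then show ?thesis
      by (simp add: mgcp_pmf_eq_sum_jump_counts[OF n] sum_distrib_right)
  qed
  moreover have "(\<Prod>p\<in>jump_types. exp (z p) * e p) = exp (- mgcp_exponent u * x)"
  proof -
    have "(\<Prod>p\<in>jump_types. exp (z p) * e p) = exp (\<Sum>p\<in>jump_types. z p - rate p * x)"
      by (simp add: e_def exp_sum finite_jump_types exp_diff exp_minus field_simps)
    also have "(\<Sum>p\<in>jump_types. z p - rate p * x) = - mgcp_exponent u * x"
      by (simp add: z_def mgcp_exponent_def sum_distrib_left sum_distrib_right algebra_simps sum_subtractf)
    finally show ?thesis .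
  qed
  ultimately show ?thesis
    by (auto intro: has_sum_cong[THEN iffD1, rotated])
qed

lemma mgcp_pmf_nonneg:
  assumes "0 \<le> x"
  shows "0 \<le> mgcp_pmf q k lam x n"
  unfolding mgcp_pmf_def
proof (intro prod_nonneg sum_nonneg)
  fix i j v
  assume "i \<in> {1..q}" "j \<in> {1..k i}"
  then have "0 < lam i j"
    using lam_pos by auto
  then show "0 \<le> (lam i j * x) ^ v j / fact (v j) * exp (- lam i j * x)"
    using assms by simp
qed

lemma mgcp_pmf_le_1:
  assumes "0 \<le> x" "n \<in> lattice q"
  shows "mgcp_pmf q k lam x n \<le> 1"
proof -
  have "((\<lambda>n. mgcp_pmf q k lam x n) has_sum 1) (lattice q)"
    using has_sum_mgcp_pmf_laplace[of "\<lambda>_. 0" x] assms(1) by simp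
  then have "sum (\<lambda>n. mgcp_pmf q k lam x n) {n} \<le> 1"
    by (rule finite_sum_le_has_sum) (use assms mgcp_pmf_nonneg in auto)
  then show ?thesis
    by simp
qed

lemma borel_measurable_mgcp_pmf: "(\<lambda>x. mgcp_pmf q k lam x n) \<in> borel_measurable borel"
  unfolding mgcp_pmf_def by measurable

end

section \<open>The Levy weights\<close>

locale tempered_mgcp = mgcp +
  fixes \<alpha> \<theta> :: real
  assumes alpha_pos: "0 < \<alpha>" and alpha_less_1: "\<alpha> < 1" and theta_pos: "\<theta> > 0"
begin

definition tempered_rate :: real where
  "tempered_rate = total_rate q k lam + \<theta>"

definition levy_const :: real where
  "levy_const = \<alpha> * tempered_rate powr \<alpha> / Gamma (1 - \<alpha>)"

definition gamma_weight :: "(nat \<times> nat \<Rightarrow> nat) \<Rightarrow> real" where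
  "gamma_weight f = Gamma (real (sum f jump_types) - \<alpha>) *
     (\<Prod>p\<in>jump_types. (rate p / tempered_rate) ^ f p / fact (f p))"

definition levy_coeff :: "(nat \<Rightarrow> nat) \<Rightarrow> real" where
  "levy_coeff n = (\<Sum>v\<in>OmegaFam q k n. Gamma (real (\<Sum>i=1..q. \<Sum>j=1..k i. v i j) - \<alpha>) *
     (\<Prod>i=1..q. \<Prod>j=1..k i. (lam i j / tempered_rate) ^ (v i j) / fact (v i j)))"

definition levy_weight :: "(nat \<Rightarrow> nat) \<Rightarrow> real" where
  "levy_weight n = (if n \<in> lattice q \<and> n \<noteq> (\<lambda>_. 0) then levy_const * levy_coeff n else 0)"

lemma tempered_rate_pos: "tempered_rate > 0"
  using rate_pos theta_pos
  by (simp add: tempered_rate_def total_rate_eq_sum_rate add_nonneg_pos sum_nonneg less_imp_le)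

lemma one_minus_sum_discounted_rates:
  "1 - (\<Sum>p\<in>jump_types. rate p / tempered_rate * jump_discount u p) = (mgcp_exponent u + \<theta>) / tempered_rate"
proof -
  have "(\<Sum>p\<in>jump_types. rate p * jump_discount u p) = total_rate q k lam - mgcp_exponent u"
    by (simp add: mgcp_exponent_def total_rate_eq_sum_rate algebra_simps sum_subtractf)
  then show ?thesis
    using tempered_rate_pos by (simp add: tempered_rate_def sum_divide_distrib[symmetric] field_simps)
qed

lemma levy_const_mult_Gamma: "levy_const * Gamma (- \<alpha>) = - (tempered_rate powr \<alpha>)"
proof -
  have not_pole: "- \<alpha> \<notin> \<int>\<^sub>\<le>\<^sub>0"
    using alpha_pos alpha_less_1 by (rule uminus_notin_nonpos_Ints)
  then have "Gamma (1 - \<alpha>) = - \<alpha> * Gamma (- \<alpha>)"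
    using Gamma_plus1[OF not_pole] by (simp add: add.commute)
  then show ?thesis
    using alpha_pos not_pole by (simp add: levy_const_def Gamma_eq_zero_iff field_simps)
qed

lemma levy_coeff_eq_sum_gamma_weight:
  assumes "n \<in> lattice q"
  shows "levy_coeff n = (\<Sum>f\<in>{f\<in>jump_counts. compound_state f = n}. gamma_weight f)"
  unfolding levy_coeff_def sum_OmegaFam_eq_sum_count_matrix[OF assms]
proof (intro sum.cong refl)
  fix f
  assume "f \<in> {f\<in>jump_counts. compound_state f = n}"
  then have f: "f \<in> jump_counts"
    by simp
  show "Gamma (real (\<Sum>i=1..q. \<Sum>j=1..k i. count_matrix f i j) - \<alpha>) *
      (\<Prod>i=1..q. \<Prod>j=1..k i. (lam i j / tempered_rate) ^ (count_matrix f i j) / fact (count_matrix f i j))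
      = gamma_weight f"
    using sum_count_matrix[OF f] prod_count_matrix[OF f, of "\<lambda>i j m. (lam i j / tempered_rate) ^ m / fact m"]
    by (simp add: gamma_weight_def rate_def del: of_nat_sum)
qed

lemma gamma_weight_nonneg:
  assumes "sum f jump_types \<noteq> 0"
  shows "0 \<le> gamma_weight f"
proof -
  have "0 < Gamma (real (sum f jump_types) - \<alpha>)"
    using assms alpha_less_1 by (rule Gamma_nat_minus_pos)
  then show ?thesis
    unfolding gamma_weight_def using rate_pos tempered_rate_pos
    by (intro mult_nonneg_nonneg prod_nonneg) (auto simp: less_imp_le)
qed

text \<open>The discounted rates \<open>b p = rate p / tempered_rate * jump_discount u p\<close> sum to less than one, so
  the multinomial Gamma series applies; the factor \<open>\<Prod>p. jump_discount u p ^ f p\<close> it produces is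
  the Laplace kernel of the state reached by \<open>f\<close>.\<close>
lemma has_sum_gamma_weight_laplace:
  assumes u: "\<forall>i. 0 \<le> u i"
  shows "((\<lambda>f. gamma_weight f * laplace_kernel q u (compound_state f)) has_sum
    Gamma (- \<alpha>) * (((mgcp_exponent u + \<theta>) / tempered_rate) powr \<alpha> - 1)) {f\<in>jump_counts. sum f jump_types \<noteq> 0}"
proof -
  define b where "b p = rate p / tempered_rate * jump_discount u p" for p
  have "\<forall>p\<in>jump_types. 0 \<le> b p"
    using rate_pos tempered_rate_pos jump_discount_bounds[OF u] by (simp add: b_def less_imp_le)
  moreover have "1 - sum b jump_types = (mgcp_exponent u + \<theta>) / tempered_rate"
    unfolding b_def by (rule one_minus_sum_discounted_rates)
  moreover have "0 < (mgcp_exponent u + \<theta>) / tempered_rate"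
    using mgcp_exponent_nonneg[OF u] theta_pos tempered_rate_pos by simp
  ultimately have multinomial: "((\<lambda>f. Gamma (real (sum f jump_types) - \<alpha>) * (\<Prod>p\<in>jump_types. b p ^ f p / fact (f p)))
      has_sum Gamma (- \<alpha>) * (((mgcp_exponent u + \<theta>) / tempered_rate) powr \<alpha> - 1))
      {f\<in>jump_counts. sum f jump_types \<noteq> 0}"
    using has_sum_Gamma_multinomial[OF alpha_pos alpha_less_1 finite_jump_types, of b]
    by (simp add: jump_counts_def)
  have summand_eq: "Gamma (real (sum f jump_types) - \<alpha>) * (\<Prod>p\<in>jump_types. b p ^ f p / fact (f p))
      = gamma_weight f * laplace_kernel q u (compound_state f)" if "f \<in> jump_counts" for f
  proof -
    have "(\<Prod>p\<in>jump_types. b p ^ f p / fact (f p))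
        = (\<Prod>p\<in>jump_types. (rate p / tempered_rate) ^ f p / fact (f p)) * (\<Prod>p\<in>jump_types. jump_discount u p ^ f p)"
      by (simp add: b_def power_mult_distrib prod.distrib[symmetric] field_simps)
    then show ?thesis
      using that by (simp add: gamma_weight_def laplace_kernel_eq_prod_jump_discount)
  qed
  from multinomial show ?thesis
    by (rule has_sum_cong[THEN iffD1, rotated]) (blast intro: summand_eq)
qed

lemma has_sum_levy_weight_laplace:
  assumes u: "\<forall>i. 0 \<le> u i"
  shows "((\<lambda>n. laplace_kernel q u n * levy_weight n) has_sum
    levy_const * (Gamma (- \<alpha>) * (((mgcp_exponent u + \<theta>) / tempered_rate) powr \<alpha> - 1))) UNIV"
proof -
  let ?F = "\<lambda>n. {f\<in>{f\<in>jump_counts. sum f jump_types \<noteq> 0}. compound_state f = n}"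
  have "((\<lambda>n. \<Sum>f\<in>?F n. gamma_weight f * laplace_kernel q u (compound_state f)) has_sum
      Gamma (- \<alpha>) * (((mgcp_exponent u + \<theta>) / tempered_rate) powr \<alpha> - 1)) (lattice q - {\<lambda>_. 0})"
    by (rule has_sum_fiber_sums[OF has_sum_gamma_weight_laplace[OF u]])
      (auto simp: compound_state_in_lattice compound_state_eq_0_iff
        intro: finite_subset[OF _ finite_compound_state_fiber])
  moreover have fiber_sum: "(\<Sum>f\<in>?F n. gamma_weight f * laplace_kernel q u (compound_state f))
      = laplace_kernel q u n * levy_coeff n" if "n \<in> lattice q - {\<lambda>_. 0}" for n
  proof -
    have "?F n = {f\<in>jump_counts. compound_state f = n}"
      using that compound_state_eq_0_iff by auto
    then show ?thesis
      using that by (simp add: levy_coeff_eq_sum_gamma_weight sum_distrib_left mult.commute)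
  qed
  ultimately have "((\<lambda>n. laplace_kernel q u n * levy_coeff n) has_sum
      Gamma (- \<alpha>) * (((mgcp_exponent u + \<theta>) / tempered_rate) powr \<alpha> - 1)) (lattice q - {\<lambda>_. 0})"
    by (rule has_sum_cong[THEN iffD1, rotated]) (simp add: fiber_sum)
  from has_sum_cmult_right[OF this, of levy_const]
  show ?thesis
    by (rule has_sum_cong_neutral[THEN iffD1, rotated -1]) (auto simp: levy_weight_def)
qed

lemma levy_weight_summable: "levy_weight summable_on UNIV"
  using has_sum_levy_weight_laplace[of "\<lambda>_. 0"] by (auto simp: summable_on_def)

lemma levy_weight_nonneg: "0 \<le> levy_weight n"
proof -
  have "0 < levy_const"
    using alpha_pos alpha_less_1 tempered_rate_pos by (simp add: levy_const_def Gamma_real_pos)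
  moreover have "0 \<le> levy_coeff n" if "n \<in> lattice q" "n \<noteq> (\<lambda>_. 0)"
    using that compound_state_eq_0_iff
    by (auto simp: levy_coeff_eq_sum_gamma_weight intro!: sum_nonneg gamma_weight_nonneg)
  ultimately show ?thesis
    by (simp add: levy_weight_def)
qed

lemma levy_weight_support: "levy_weight n \<noteq> 0 \<Longrightarrow> n \<in> lattice q \<and> n \<noteq> (\<lambda>_. 0)"
  by (simp add: levy_weight_def split: if_splits)

lemma has_sum_levy_weight_exponent:
  assumes u: "\<forall>i. 0 \<le> u i"
  shows "((\<lambda>n. (1 - laplace_kernel q u n) * levy_weight n) has_sum
    ((mgcp_exponent u + \<theta>) powr \<alpha> - \<theta> powr \<alpha>)) UNIV"
proof -
  have difference: "((\<lambda>n. levy_weight n - laplace_kernel q u n * levy_weight n) has_sum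
      levy_const * (Gamma (- \<alpha>) * ((\<theta> / tempered_rate) powr \<alpha> - 1))
      - levy_const * (Gamma (- \<alpha>) * (((mgcp_exponent u + \<theta>) / tempered_rate) powr \<alpha> - 1))) UNIV"
    using has_sum_diff[OF has_sum_levy_weight_laplace[of "\<lambda>_. 0"] has_sum_levy_weight_laplace[OF u]]
    by simp
  have exponent_value: "levy_const * (Gamma (- \<alpha>) * ((\<theta> / tempered_rate) powr \<alpha> - 1))
      - levy_const * (Gamma (- \<alpha>) * (((mgcp_exponent u + \<theta>) / tempered_rate) powr \<alpha> - 1))
      = (mgcp_exponent u + \<theta>) powr \<alpha> - \<theta> powr \<alpha>"
  proof -
    have "levy_const * (Gamma (- \<alpha>) * ((\<theta> / tempered_rate) powr \<alpha> - 1))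
        - levy_const * (Gamma (- \<alpha>) * (((mgcp_exponent u + \<theta>) / tempered_rate) powr \<alpha> - 1))
        = (levy_const * Gamma (- \<alpha>))
          * ((\<theta> / tempered_rate) powr \<alpha> - ((mgcp_exponent u + \<theta>) / tempered_rate) powr \<alpha>)"
      by (simp add: algebra_simps)
    also have "\<dots> = - (tempered_rate powr \<alpha>)
        * (\<theta> powr \<alpha> / tempered_rate powr \<alpha> - (mgcp_exponent u + \<theta>) powr \<alpha> / tempered_rate powr \<alpha>)"
      using tempered_rate_pos theta_pos mgcp_exponent_nonneg[OF u]
      by (simp add: levy_const_mult_Gamma powr_divide)
    also have "\<dots> = (mgcp_exponent u + \<theta>) powr \<alpha> - \<theta> powr \<alpha>"
      using tempered_rate_pos by (simp add: field_simps)
    finally show ?thesis .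
  qed
  have "(\<lambda>n. (1 - laplace_kernel q u n) * levy_weight n)
      = (\<lambda>n. levy_weight n - laplace_kernel q u n * levy_weight n)"
    by (simp add: fun_eq_iff algebra_simps)
  with difference show ?thesis
    unfolding exponent_value by simp
qed

lemma infsum_levy_weight_eq:
  "(\<Sum>\<^sub>\<infinity>n\<in>{n\<in>lattice q. \<forall>i\<in>{1..q}. n i \<in> A i}. levy_weight n) =
    \<alpha> * (total_rate q k lam + \<theta>) powr \<alpha> / Gamma (1 - \<alpha>) *
    (\<Sum>\<^sub>\<infinity>n\<in>{n\<in>lattice q. n \<noteq> (\<lambda>_. 0)}.
       \<Sum>v\<in>OmegaFam q k n.
         Gamma (real (\<Sum>i=1..q. \<Sum>j=1..k i. v i j) - \<alpha>) *
         (\<Prod>i=1..q. \<Prod>j=1..k i.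
            (lam i j / (total_rate q k lam + \<theta>)) ^ (v i j) / fact (v i j)) *
         (if \<forall>i\<in>{1..q}. n i \<in> A i then 1 else 0))"
proof -
  define ind where "ind n = (if \<forall>i\<in>{1..q}. n i \<in> A i then 1 else (0 :: real))" for n :: "nat \<Rightarrow> nat"
  have "(\<Sum>\<^sub>\<infinity>n\<in>{n\<in>lattice q. \<forall>i\<in>{1..q}. n i \<in> A i}. levy_weight n)
      = (\<Sum>\<^sub>\<infinity>n\<in>{n\<in>lattice q. n \<noteq> (\<lambda>_. 0)}. levy_const * (levy_coeff n * ind n))"
    by (rule infsum_cong_neutral) (auto simp: levy_weight_def ind_def)
  also have "\<dots> = levy_const * (\<Sum>\<^sub>\<infinity>n\<in>{n\<in>lattice q. n \<noteq> (\<lambda>_. 0)}. levy_coeff n * ind n)"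
    by (rule infsum_cmult_right')
  finally show ?thesis
    by (simp add: levy_const_def tempered_rate_def levy_coeff_def ind_def sum_distrib_right)
qed

end

section \<open>Subordination\<close>

locale subordinated_mgcp = tempered_mgcp +
  fixes mu :: "real \<Rightarrow> real measure"
  assumes q_pos: "q \<ge> 1"
    and mu: "\<forall>t\<ge>0. prob_space (mu t) \<and> sets (mu t) = sets borel \<and> (AE x in mu t. 0 \<le> x) \<and>
      (\<forall>s\<ge>0. (\<integral>x. exp (- s * x) \<partial>(mu t)) = exp (- t * ((s + \<theta>) powr \<alpha> - \<theta> powr \<alpha>)))"
begin

lemma has_sum_subord_pmf_laplace:
  assumes t: "t \<ge> 0" and u: "\<forall>i. 0 \<le> u i"
  shows "((\<lambda>n. subord_pmf q k lam mu t n * laplace_kernel q u n) has_sum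
    exp (- t * ((mgcp_exponent u + \<theta>) powr \<alpha> - \<theta> powr \<alpha>))) (lattice q)"
proof -
  interpret prob_space "mu t"
    using mu t by auto
  have nonneg: "AE x in mu t. 0 \<le> x" and sets: "sets (mu t) = sets borel"
    using mu t by auto
  have measurable: "borel_measurable (mu t) = borel_measurable borel"
    by (rule measurable_cong_sets[OF sets refl])
  have bounded_integrable: "integrable (mu t) f"
    if "f \<in> borel_measurable borel" "AE x in mu t. norm (f x) \<le> 1" for f :: "real \<Rightarrow> real"
    using that(2) by (rule integrable_const_bound) (simp add: measurable that(1))
  have "((\<lambda>n. \<integral>x. mgcp_pmf q k lam x n * laplace_kernel q u n \<partial>(mu t))
      has_sum (\<integral>x. exp (- mgcp_exponent u * x) \<partial>(mu t))) (lattice q)"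
  proof (rule has_sum_integral_nonneg[OF countable_lattice infinite_lattice[OF q_pos]])
    show "integrable (mu t) (\<lambda>x. mgcp_pmf q k lam x n * laplace_kernel q u n)" if "n \<in> lattice q" for n
    proof -
      have "\<bar>laplace_kernel q u n\<bar> \<le> 1"
        using laplace_kernel_bounds[OF u, of q n] by simp
      then show ?thesis
        using nonneg borel_measurable_mgcp_pmf mgcp_pmf_nonneg mgcp_pmf_le_1[OF _ that]
        by (intro bounded_integrable) (auto elim!: eventually_mono simp: abs_mult intro!: mult_le_one)
    qed
    show "AE x in mu t. 0 \<le> mgcp_pmf q k lam x n * laplace_kernel q u n" for n
      using nonneg mgcp_pmf_nonneg less_imp_le[OF laplace_kernel_bounds(1)[OF u]]
      by (auto elim!: eventually_mono intro!: mult_nonneg_nonneg)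
    show "AE x in mu t. ((\<lambda>n. mgcp_pmf q k lam x n * laplace_kernel q u n)
        has_sum exp (- mgcp_exponent u * x)) (lattice q)"
      using nonneg by eventually_elim (rule has_sum_mgcp_pmf_laplace[OF u])
    show "integrable (mu t) (\<lambda>x. exp (- mgcp_exponent u * x))"
      using nonneg mgcp_exponent_nonneg[OF u]
      by (intro bounded_integrable) (auto elim!: eventually_mono simp: mult_nonneg_nonneg)
  qed
  then show ?thesis
    using mu t mgcp_exponent_nonneg[OF u] by (simp add: subord_pmf_def)
qed

lemma is_levy_measure_levy_weight: "is_levy_measure q (subord_pmf q k lam mu) levy_weight"
  unfolding is_levy_measure_def laplace_kernel_def[symmetric]
proof (intro conjI allI impI)
  fix t :: real and u :: "nat \<Rightarrow> real"
  assume "0 \<le> t" "\<forall>i. 0 \<le> u i"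
  then show "(\<Sum>\<^sub>\<infinity>n\<in>lattice q. subord_pmf q k lam mu t n * laplace_kernel q u n)
      = exp (- t * (\<Sum>\<^sub>\<infinity>n. (1 - laplace_kernel q u n) * levy_weight n))"
    using infsumI[OF has_sum_subord_pmf_laplace] infsumI[OF has_sum_levy_weight_exponent] by simp
qed (use levy_weight_nonneg levy_weight_summable levy_weight_support in blast)+

lemma is_levy_measure_imp_eq_levy_weight:
  assumes "is_levy_measure q (subord_pmf q k lam mu) w"
  shows "w = levy_weight"
proof (rule laplace_exponent_determines_weights)
  show "\<forall>n. 0 \<le> w n" "w summable_on UNIV" "\<And>n. w n \<noteq> 0 \<Longrightarrow> n \<in> lattice q \<and> n \<noteq> (\<lambda>_. 0)"
    using assms by (auto simp: is_levy_measure_def)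
  show "\<forall>n. 0 \<le> levy_weight n" "levy_weight summable_on UNIV"
    "\<And>n. levy_weight n \<noteq> 0 \<Longrightarrow> n \<in> lattice q \<and> n \<noteq> (\<lambda>_. 0)"
    by (simp_all add: levy_weight_nonneg levy_weight_summable levy_weight_support)
  fix u :: "nat \<Rightarrow> real"
  assume u: "\<forall>i. 0 \<le> u i"
  have "exp (- (\<Sum>\<^sub>\<infinity>n. (1 - laplace_kernel q u n) * w n))
      = exp (- ((mgcp_exponent u + \<theta>) powr \<alpha> - \<theta> powr \<alpha>))"
    using assms u infsumI[OF has_sum_subord_pmf_laplace[of 1 u]]
    by (simp add: is_levy_measure_def laplace_kernel_def)
  then show "(\<Sum>\<^sub>\<infinity>n. (1 - laplace_kernel q u n) * w n) = (\<Sum>\<^sub>\<infinity>n. (1 - laplace_kernel q u n) * levy_weight n)"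
    using infsumI[OF has_sum_levy_weight_exponent[OF u]] by simp
qed

end

theorem mainTheorem14:
  fixes q :: nat and k :: "nat \<Rightarrow> nat" and lam :: "nat \<Rightarrow> nat \<Rightarrow> real"
    and \<alpha> \<theta> :: real and mu :: "real \<Rightarrow> real measure"
  assumes "q \<ge> 1"
    and "\<forall>i\<in>{1..q}. k i \<ge> 1"
    and "\<forall>i\<in>{1..q}. \<forall>j\<in>{1..k i}. lam i j > 0"
    and "0 < \<alpha>" and "\<alpha> < 1" and "\<theta> > 0"
    and "\<forall>t\<ge>0. prob_space (mu t) \<and> sets (mu t) = sets borel \<and> (AE x in mu t. 0 \<le> x) \<and>
           (\<forall>s\<ge>0. (\<integral>x. exp (- s * x) \<partial>(mu t)) = exp (- t * ((s + \<theta>) powr \<alpha> - \<theta> powr \<alpha>)))"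
  shows "(\<exists>w. is_levy_measure q (subord_pmf q k lam mu) w) \<and>
    (\<forall>w. is_levy_measure q (subord_pmf q k lam mu) w \<longrightarrow>
      (\<forall>A :: nat \<Rightarrow> nat set.
        (\<Sum>\<^sub>\<infinity>n\<in>{n\<in>lattice q. \<forall>i\<in>{1..q}. n i \<in> A i}. w n) =
        \<alpha> * (total_rate q k lam + \<theta>) powr \<alpha> / Gamma (1 - \<alpha>) *
        (\<Sum>\<^sub>\<infinity>n\<in>{n\<in>lattice q. n \<noteq> (\<lambda>_. 0)}.
           \<Sum>v\<in>OmegaFam q k n.
             Gamma (real (\<Sum>i=1..q. \<Sum>j=1..k i. v i j) - \<alpha>) *
             (\<Prod>i=1..q. \<Prod>j=1..k i.
                (lam i j / (total_rate q k lam + \<theta>)) ^ (v i j) / fact (v i j)) *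
             (if \<forall>i\<in>{1..q}. n i \<in> A i then 1 else 0))))"
proof -
  interpret subordinated_mgcp q k lam \<alpha> \<theta> mu
    by unfold_locales (use assms in auto)
  show ?thesis
    using is_levy_measure_levy_weight is_levy_measure_imp_eq_levy_weight infsum_levy_weight_eq
    by blast
qed

end
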